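(* Let $\Phi,\Psi,S,T$ be finite sets and let $p(s,t,\varphi,\psi)$ be a state-consistent entangled joint distribution on $S\times T\times\Phi\times\Psi$, where the states $\varphi,\psi$ are independent with marginals $p(\varphi),p(\psi)$. Define $\widetilde p(s,t,\varphi,\psi)=p(s,t,\varphi)\,p(\psi)$, where $p(s,t,\varphi)=\sum_{\psi}p(s,t,\varphi,\psi)$. If $(s,t,\varphi,\psi)$ is distributed according to $\widetilde p$, then $t$ is independent of $(\varphi,\psi)$; specifically $\widetilde p(t,\varphi,\psi)=p(t)\,p(\varphi,\psi)$.
   Context: A joint distribution of $(s,t,\varphi,\psi)$ is: state-consistent if its $(\varphi,\psi)$-marginal equals $p(\varphi)p(\psi)$; disjoint if $\Pr\{\psi\mid\varphi,s\}=\Pr\{\psi\mid\varphi\}$ and $\Pr\{\varphi\mid\psi,t\}=\Pr\{\varphi\mid\psi\}$ (whenever the conditioning events have positive probability); classically generated if there exists a random variable $x$ independent of $(\varphi,\psi)$ such that $p(s,t\mid x,\varphi,\psi)=p(s\mid x,\varphi)\,p(t\mid x,\psi)$; entangled if it is disjoint and not classically generated. *)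

theory Defs
  imports Complex_Main
begin

definition is_dist4 :: "('s::finite \<Rightarrow> 't::finite \<Rightarrow> 'f::finite \<Rightarrow> 'g::finite \<Rightarrow> real) \<Rightarrow> bool" where
  "is_dist4 p \<longleftrightarrow> (\<forall>s t f g. 0 \<le> p s t f g) \<and> (\<Sum>s\<in>UNIV. \<Sum>t\<in>UNIV. \<Sum>f\<in>UNIV. \<Sum>g\<in>UNIV. p s t f g) = 1"

definition mPhiPsi :: "('s::finite \<Rightarrow> 't::finite \<Rightarrow> 'f \<Rightarrow> 'g \<Rightarrow> real) \<Rightarrow> 'f \<Rightarrow> 'g \<Rightarrow> real" where
  "mPhiPsi p f g = (\<Sum>s\<in>UNIV. \<Sum>t\<in>UNIV. p s t f g)"

definition mPhi :: "('s::finite \<Rightarrow> 't::finite \<Rightarrow> 'f \<Rightarrow> 'g::finite \<Rightarrow> real) \<Rightarrow> 'f \<Rightarrow> real" where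
  "mPhi p f = (\<Sum>g\<in>UNIV. mPhiPsi p f g)"

definition mPsi :: "('s::finite \<Rightarrow> 't::finite \<Rightarrow> 'f::finite \<Rightarrow> 'g \<Rightarrow> real) \<Rightarrow> 'g \<Rightarrow> real" where
  "mPsi p g = (\<Sum>f\<in>UNIV. mPhiPsi p f g)"

definition mSPhiPsi :: "('s \<Rightarrow> 't::finite \<Rightarrow> 'f \<Rightarrow> 'g \<Rightarrow> real) \<Rightarrow> 's \<Rightarrow> 'f \<Rightarrow> 'g \<Rightarrow> real" where
  "mSPhiPsi p s f g = (\<Sum>t\<in>UNIV. p s t f g)"

definition mSPhi :: "('s \<Rightarrow> 't::finite \<Rightarrow> 'f \<Rightarrow> 'g::finite \<Rightarrow> real) \<Rightarrow> 's \<Rightarrow> 'f \<Rightarrow> real" where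
  "mSPhi p s f = (\<Sum>g\<in>UNIV. mSPhiPsi p s f g)"

definition mTPhiPsi :: "('s::finite \<Rightarrow> 't \<Rightarrow> 'f \<Rightarrow> 'g \<Rightarrow> real) \<Rightarrow> 't \<Rightarrow> 'f \<Rightarrow> 'g \<Rightarrow> real" where
  "mTPhiPsi p t f g = (\<Sum>s\<in>UNIV. p s t f g)"

definition mTPsi :: "('s::finite \<Rightarrow> 't \<Rightarrow> 'f::finite \<Rightarrow> 'g \<Rightarrow> real) \<Rightarrow> 't \<Rightarrow> 'g \<Rightarrow> real" where
  "mTPsi p t g = (\<Sum>f\<in>UNIV. mTPhiPsi p t f g)"

definition mT :: "('s::finite \<Rightarrow> 't \<Rightarrow> 'f::finite \<Rightarrow> 'g::finite \<Rightarrow> real) \<Rightarrow> 't \<Rightarrow> real" where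
  "mT p t = (\<Sum>g\<in>UNIV. mTPsi p t g)"

definition mSTPhi :: "('s \<Rightarrow> 't \<Rightarrow> 'f \<Rightarrow> 'g::finite \<Rightarrow> real) \<Rightarrow> 's \<Rightarrow> 't \<Rightarrow> 'f \<Rightarrow> real" where
  "mSTPhi p s t f = (\<Sum>g\<in>UNIV. p s t f g)"

definition state_consistent :: "('s::finite \<Rightarrow> 't::finite \<Rightarrow> 'f::finite \<Rightarrow> 'g::finite \<Rightarrow> real) \<Rightarrow> bool" where
  "state_consistent p \<longleftrightarrow> (\<forall>f g. mPhiPsi p f g = mPhi p f * mPsi p g)"

text \<open>Disjoint: Pr{psi | phi, s} = Pr{psi | phi} and Pr{phi | psi, t} = Pr{phi | psi},
  whenever the conditioning events have positive probability.\<close>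
definition disjoint :: "('s::finite \<Rightarrow> 't::finite \<Rightarrow> 'f::finite \<Rightarrow> 'g::finite \<Rightarrow> real) \<Rightarrow> bool" where
  "disjoint p \<longleftrightarrow>
     (\<forall>s f g. 0 < mSPhi p s f \<longrightarrow> mSPhiPsi p s f g / mSPhi p s f = mPhiPsi p f g / mPhi p f) \<and>
     (\<forall>t f g. 0 < mTPsi p t g \<longrightarrow> mTPhiPsi p t f g / mTPsi p t g = mPhiPsi p f g / mPsi p g)"

text \<open>Classically generated: there is a (discrete, finitely supported, nat-valued) random
  variable x, jointly distributed with (s,t,phi,psi) via r, whose marginal on (s,t,phi,psi)
  is p, with x independent of (phi,psi) and
  p(s,t | x,phi,psi) = p(s | x,phi) p(t | x,psi) whenever p(x,phi,psi) > 0.\<close>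
definition classically_generated :: "('s::finite \<Rightarrow> 't::finite \<Rightarrow> 'f::finite \<Rightarrow> 'g::finite \<Rightarrow> real) \<Rightarrow> bool" where
  "classically_generated p \<longleftrightarrow>
    (\<exists>(N::nat) (r :: nat \<Rightarrow> 's \<Rightarrow> 't \<Rightarrow> 'f \<Rightarrow> 'g \<Rightarrow> real).
       (\<forall>x s t f g. 0 \<le> r x s t f g) \<and>
       (\<forall>x s t f g. N \<le> x \<longrightarrow> r x s t f g = 0) \<and>
       (\<forall>s t f g. (\<Sum>x<N. r x s t f g) = p s t f g) \<and>
       (\<forall>x f g. mPhiPsi (r x) f g = (\<Sum>s\<in>UNIV. \<Sum>t\<in>UNIV. \<Sum>f'\<in>UNIV. \<Sum>g'\<in>UNIV. r x s t f' g') * mPhiPsi p f g) \<and>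
       (\<forall>x s t f g. 0 < mPhiPsi (r x) f g \<longrightarrow>
          r x s t f g / mPhiPsi (r x) f g =
          (mSPhi (r x) s f / mPhi (r x) f) * (mTPsi (r x) t g / mPsi (r x) g)))"

definition entangled :: "('s::finite \<Rightarrow> 't::finite \<Rightarrow> 'f::finite \<Rightarrow> 'g::finite \<Rightarrow> real) \<Rightarrow> bool" where
  "entangled p \<longleftrightarrow> disjoint p \<and> \<not> classically_generated p"

definition ptilde :: "('s::finite \<Rightarrow> 't::finite \<Rightarrow> 'f::finite \<Rightarrow> 'g::finite \<Rightarrow> real) \<Rightarrow> 's \<Rightarrow> 't \<Rightarrow> 'f \<Rightarrow> 'g \<Rightarrow> real" where
  "ptilde p s t f g = mSTPhi p s t f * mPsi p g"

end

theory Submission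
  imports Defs
begin

(* Disjointness and state consistency give p(phi | t, psi) = p(phi | psi) = p(phi), i.e.
   p(t,phi,psi) = p(phi) p(t,psi).  Summing over psi gives p(t,phi) = p(t) p(phi). *)

(* Rewriting with sum.swap restricted to one index type pulls every sum over that type to the
   outside (and terminates, unlike unrestricted sum.swap); doing so for the indices in reverse
   of the target order s, t, f, g normalizes a nested sum. *)
lemma sum_mT:
  fixes p :: "'s::finite \<Rightarrow> 't::finite \<Rightarrow> 'f::finite \<Rightarrow> 'g::finite \<Rightarrow> real"
  shows "(\<Sum>t\<in>UNIV. mT p t) = (\<Sum>s\<in>UNIV. \<Sum>t\<in>UNIV. \<Sum>f\<in>UNIV. \<Sum>g\<in>UNIV. p s t f g)"
  unfolding mT_def mTPsi_def mTPhiPsi_def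
  by (simp only: sum.swap[of _ "UNIV::'f set"], simp only: sum.swap[of _ "UNIV::'s set"])

lemma sum_mPsi:
  fixes p :: "'s::finite \<Rightarrow> 't::finite \<Rightarrow> 'f::finite \<Rightarrow> 'g::finite \<Rightarrow> real"
  shows "(\<Sum>g\<in>UNIV. mPsi p g) = (\<Sum>s\<in>UNIV. \<Sum>t\<in>UNIV. \<Sum>f\<in>UNIV. \<Sum>g\<in>UNIV. p s t f g)"
  unfolding mPsi_def mPhiPsi_def
  by (simp only: sum.swap[of _ "UNIV::'f set"], simp only: sum.swap[of _ "UNIV::'t set"],
      simp only: sum.swap[of _ "UNIV::'s set"])

lemma mPhiPsi_eq_sum_mTPhiPsi: "mPhiPsi p f g = (\<Sum>t\<in>UNIV. mTPhiPsi p t f g)"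
  unfolding mPhiPsi_def mTPhiPsi_def by (rule sum.swap)

lemma mTPsi_nonneg:
  assumes "\<And>s t f g. 0 \<le> p s t f g"
  shows "0 \<le> mTPsi p t g"
  unfolding mTPsi_def mTPhiPsi_def by (simp add: assms sum_nonneg)

lemma mTPsi_le_mPsi:
  assumes "\<And>s t f g. 0 \<le> p s t f g"
  shows "mTPsi p t g \<le> mPsi p g"
  unfolding mTPsi_def mPsi_def mTPhiPsi_def mPhiPsi_def
  by (intro sum_mono member_le_sum) (auto simp: assms)

lemma mTPhiPsi_eq_mPhi_mult_mTPsi:
  assumes nonneg: "\<And>s t f g. 0 \<le> p s t f g"
    and "state_consistent p" and "disjoint p"
  shows "mTPhiPsi p t f g = mPhi p f * mTPsi p t g"
proof (cases "mTPsi p t g = 0")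
  case True
  have "\<forall>f\<in>UNIV. mTPhiPsi p t f g = 0"
    using True unfolding mTPsi_def mTPhiPsi_def
    by (subst (asm) sum_nonneg_eq_0_iff) (auto simp: nonneg sum_nonneg)
  with True show ?thesis by simp
next
  case False
  with mTPsi_nonneg[of p] nonneg have pos: "0 < mTPsi p t g"
    by (simp add: order_less_le)
  also have "mTPsi p t g \<le> mPsi p g"
    by (rule mTPsi_le_mPsi) (rule nonneg)
  finally have "0 < mPsi p g" .
  have "mTPhiPsi p t f g / mTPsi p t g = mPhiPsi p f g / mPsi p g"
    using \<open>disjoint p\<close> pos unfolding disjoint_def by blast
  also have "\<dots> = mPhi p f"
    using \<open>state_consistent p\<close> \<open>0 < mPsi p g\<close> unfolding state_consistent_def by simp
  finally show ?thesis
    using pos by (simp add: field_simps)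
qed

lemma mTPhiPsi_ptilde:
  fixes p :: "'s::finite \<Rightarrow> 't::finite \<Rightarrow> 'f::finite \<Rightarrow> 'g::finite \<Rightarrow> real"
  shows "mTPhiPsi (ptilde p) t f g = (\<Sum>g'\<in>UNIV. mTPhiPsi p t f g') * mPsi p g"
  unfolding mTPhiPsi_def ptilde_def mSTPhi_def
  by (simp add: sum_distrib_right[symmetric] sum.swap[of _ "UNIV::'s set"])

lemma mTPhiPsi_ptilde_eq_mT_mult_mPhiPsi:
  assumes "\<And>s t f g. 0 \<le> p s t f g"
    and "state_consistent p" and "disjoint p"
  shows "mTPhiPsi (ptilde p) t f g = mT p t * mPhiPsi p f g"
proof -
  have "mTPhiPsi (ptilde p) t f g = (\<Sum>g'\<in>UNIV. mPhi p f * mTPsi p t g') * mPsi p g"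
    by (simp add: mTPhiPsi_ptilde mTPhiPsi_eq_mPhi_mult_mTPsi[OF assms])
  also have "\<dots> = mT p t * (mPhi p f * mPsi p g)"
    by (simp add: mT_def sum_distrib_left[symmetric] mult_ac)
  finally show ?thesis
    using \<open>state_consistent p\<close> unfolding state_consistent_def by simp
qed

lemma mT_of_product_form:
  assumes "\<And>t f g. mTPhiPsi q t f g = a t * b f g"
  shows "mT q t = a t * (\<Sum>g\<in>UNIV. \<Sum>f\<in>UNIV. b f g)"
  unfolding mT_def mTPsi_def by (simp add: assms sum_distrib_left)

lemma mPhiPsi_of_product_form:
  assumes "\<And>t f g. mTPhiPsi q t f g = a t * b f g"
  shows "mPhiPsi q f g = (\<Sum>t\<in>UNIV. a t) * b f g"
  by (simp add: mPhiPsi_eq_sum_mTPhiPsi assms sum_distrib_right)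

theorem corollary4:
  fixes p :: "'s::finite \<Rightarrow> 't::finite \<Rightarrow> 'f::finite \<Rightarrow> 'g::finite \<Rightarrow> real"
  assumes "is_dist4 p"
    and "state_consistent p"
    and "entangled p"
  shows "(\<forall>t f g. mTPhiPsi (ptilde p) t f g = mT (ptilde p) t * mPhiPsi (ptilde p) f g)
         \<and> (\<forall>t f g. mTPhiPsi (ptilde p) t f g = mT p t * mPhiPsi p f g)"
proof -
  have nonneg: "\<And>s t f g. 0 \<le> p s t f g"
    and total: "(\<Sum>s\<in>UNIV. \<Sum>t\<in>UNIV. \<Sum>f\<in>UNIV. \<Sum>g\<in>UNIV. p s t f g) = 1"
    using \<open>is_dist4 p\<close> unfolding is_dist4_def by auto
  have "disjoint p"
    using \<open>entangled p\<close> unfolding entangled_def by blast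
  have factor: "\<And>t f g. mTPhiPsi (ptilde p) t f g = mT p t * mPhiPsi p f g"
    by (rule mTPhiPsi_ptilde_eq_mT_mult_mPhiPsi[OF nonneg \<open>state_consistent p\<close> \<open>disjoint p\<close>])
  have "mT (ptilde p) t = mT p t" for t
    using mT_of_product_form[OF factor] sum_mPsi[of p] total by (simp add: mPsi_def)
  moreover have "mPhiPsi (ptilde p) f g = mPhiPsi p f g" for f g
    using mPhiPsi_of_product_form[OF factor] sum_mT[of p] total by simp
  ultimately show ?thesis
    using factor by simp
qed

end
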